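(* Let $\Gamma''$ be a congruence subgroup of $\operatorname{Mp}_2(\mathbb{Z})$, let $f$ be a harmonic Maass form of weight $k$ and $g$ a harmonic Maass form of weight $l$ for $\Gamma''$. For every non-negative integer $j$, \[ (-4\pi)^jL[f,g]_j=\binom{l+j-1}{j}(R_k^jf)(Lg)+(-1)^j\binom{k+j-1}{j}(Lf)(R_l^jg). \]
   Context: $\tau=u+iv\in\mathbb{H}$. $R_k=2i\partial_\tau+kv^{-1}$, $L=L_k=-2iv^2\partial_{\bar\tau}$ (independent of $k$), $R_k^j=R_{k+2(j-1)}\circ\cdots\circ R_k$. The weight $k$ Laplacian is $\Delta_k=-v^2(\partial_u^2+\partial_v^2)+ikv(\partial_u+i\partial_v)$. A harmonic Maass form of weight $k$ for $\Gamma''$ is a smooth $f:\mathbb{H}\to\mathbb{C}$ invariant under the weight $k$ slash action of $\Gamma''$, with $\Delta_kf=0$ and at most exponential growth at the cusps. The $j$-th Rankin–Cohen bracket of $f$ (weight $k$) and $g$ (weight $l$) is $[f,g]_j=\sum_{s=0}^j(-1)^s\binom{k+j-1}{s}\binom{l+j-1}{j-s}f^{(j-s)}g^{(s)}$, where $f^{(s)}=(2\pi i)^{-s}\partial_\tau^sf$ and $\binom{x}{s}=x(x-1)\cdots(x-s+1)/s!$ for real $x$. *)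

theory Defs
  imports "HOL-Analysis.Analysis"
begin

definition uhp :: "complex set" where
  "uhp = {\<tau>. Im \<tau> > 0}"

type_synonym mat2 = "int \<times> int \<times> int \<times> int"

definition SL2Z :: "mat2 set" where
  "SL2Z = {(a,b,c,d). a*d - b*c = 1}"

fun mat_mult :: "mat2 \<Rightarrow> mat2 \<Rightarrow> mat2" where
  "mat_mult (a,b,c,d) (a',b',c',d') = (a*a'+b*c', a*b'+b*d', c*a'+d*c', c*b'+d*d')"

fun mat_inv :: "mat2 \<Rightarrow> mat2" where
  "mat_inv (a,b,c,d) = (d,-b,-c,a)"

fun moeb :: "mat2 \<Rightarrow> complex \<Rightarrow> complex" where
  "moeb (a,b,c,d) \<tau> = (of_int a * \<tau> + of_int b) / (of_int c * \<tau> + of_int d)"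

fun cd_lin :: "mat2 \<Rightarrow> complex \<Rightarrow> complex" where
  "cd_lin (a,b,c,d) \<tau> = of_int c * \<tau> + of_int d"

text \<open>Elements of the metaplectic group Mp2(Z): pairs (M, phi) with M in SL2(Z) and
  phi a holomorphic square root of c tau + d on the upper half-plane. To make the
  representation unique, phi is normalised to be 0 off the upper half-plane.\<close>

type_synonym mp = "mat2 \<times> (complex \<Rightarrow> complex)"

definition Mp2Z :: "mp set" where
  "Mp2Z = {(M,\<phi>). M \<in> SL2Z \<and> \<phi> holomorphic_on uhp
            \<and> (\<forall>\<tau>\<in>uhp. (\<phi> \<tau>)\<^sup>2 = cd_lin M \<tau>) \<and> (\<forall>\<tau>. \<tau> \<notin> uhp \<longrightarrow> \<phi> \<tau> = 0)}"

definition mp_one :: mp where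
  "mp_one = ((1,0,0,1), (\<lambda>\<tau>. if \<tau> \<in> uhp then 1 else 0))"

fun mp_mult :: "mp \<Rightarrow> mp \<Rightarrow> mp" where
  "mp_mult (M1,\<phi>1) (M2,\<phi>2) =
     (mat_mult M1 M2, (\<lambda>\<tau>. if \<tau> \<in> uhp then \<phi>1 (moeb M2 \<tau>) * \<phi>2 \<tau> else 0))"

fun mp_inv :: "mp \<Rightarrow> mp" where
  "mp_inv (M,\<phi>) = (mat_inv M, (\<lambda>\<tau>. if \<tau> \<in> uhp then 1 / \<phi> (moeb (mat_inv M) \<tau>) else 0))"

definition Gamma_princ :: "int \<Rightarrow> mat2 set" where
  "Gamma_princ N = {(a,b,c,d). (a,b,c,d) \<in> SL2Z \<and> a mod N = 1 mod N \<and> b mod N = 0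
                      \<and> c mod N = 0 \<and> d mod N = 1 mod N}"

definition congruence_subgroup_Mp2 :: "mp set \<Rightarrow> bool" where
  "congruence_subgroup_Mp2 G \<longleftrightarrow>
     G \<subseteq> Mp2Z \<and> mp_one \<in> G \<and> (\<forall>x\<in>G. \<forall>y\<in>G. mp_mult x y \<in> G) \<and> (\<forall>x\<in>G. mp_inv x \<in> G)
     \<and> (\<exists>N::int. N \<ge> 1 \<and> (\<forall>M\<in>Gamma_princ N. \<exists>\<phi>. (M,\<phi>) \<in> G))"

fun slash :: "real \<Rightarrow> mp \<Rightarrow> (complex \<Rightarrow> complex) \<Rightarrow> complex \<Rightarrow> complex" where
  "slash k (M,\<phi>) f \<tau> = (\<phi> \<tau>) powr (complex_of_real (-2*k)) * f (moeb M \<tau>)"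

definition d_u :: "(complex \<Rightarrow> complex) \<Rightarrow> complex \<Rightarrow> complex" where
  "d_u f \<tau> = frechet_derivative f (at \<tau>) 1"

definition d_v :: "(complex \<Rightarrow> complex) \<Rightarrow> complex \<Rightarrow> complex" where
  "d_v f \<tau> = frechet_derivative f (at \<tau>) \<i>"

fun pdiff :: "bool list \<Rightarrow> (complex \<Rightarrow> complex) \<Rightarrow> complex \<Rightarrow> complex" where
  "pdiff [] f = f"
| "pdiff (b # bs) f = (if b then d_v (pdiff bs f) else d_u (pdiff bs f))"

definition smooth_on :: "complex set \<Rightarrow> (complex \<Rightarrow> complex) \<Rightarrow> bool" where
  "smooth_on S f \<longleftrightarrow> (\<forall>bs. \<forall>\<tau>\<in>S. pdiff bs f differentiable (at \<tau>))"

definition d_tau :: "(complex \<Rightarrow> complex) \<Rightarrow> complex \<Rightarrow> complex" where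
  "d_tau f \<tau> = (d_u f \<tau> - \<i> * d_v f \<tau>) / 2"

definition d_taubar :: "(complex \<Rightarrow> complex) \<Rightarrow> complex \<Rightarrow> complex" where
  "d_taubar f \<tau> = (d_u f \<tau> + \<i> * d_v f \<tau>) / 2"

definition raise_op :: "real \<Rightarrow> (complex \<Rightarrow> complex) \<Rightarrow> complex \<Rightarrow> complex" where
  "raise_op k f \<tau> = 2 * \<i> * d_tau f \<tau> + complex_of_real (k / Im \<tau>) * f \<tau>"

fun raise_pow :: "real \<Rightarrow> nat \<Rightarrow> (complex \<Rightarrow> complex) \<Rightarrow> complex \<Rightarrow> complex" where
  "raise_pow k 0 f = f"
| "raise_pow k (Suc j) f = raise_op (k + 2 * real j) (raise_pow k j f)"

definition lower_op :: "(complex \<Rightarrow> complex) \<Rightarrow> complex \<Rightarrow> complex" where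
  "lower_op f \<tau> = - 2 * \<i> * complex_of_real ((Im \<tau>)\<^sup>2) * d_taubar f \<tau>"

definition laplace :: "real \<Rightarrow> (complex \<Rightarrow> complex) \<Rightarrow> complex \<Rightarrow> complex" where
  "laplace k f \<tau> =
     - complex_of_real ((Im \<tau>)\<^sup>2) * (d_u (d_u f) \<tau> + d_v (d_v f) \<tau>)
     + \<i> * complex_of_real (k * Im \<tau>) * (d_u f \<tau> + \<i> * d_v f \<tau>)"

definition exp_growth_at_cusps :: "real \<Rightarrow> (complex \<Rightarrow> complex) \<Rightarrow> bool" where
  "exp_growth_at_cusps k f \<longleftrightarrow>
     (\<forall>\<gamma>\<in>Mp2Z. \<exists>C B. \<forall>\<tau>. Im \<tau> \<ge> B \<longrightarrow> norm (slash k \<gamma> f \<tau>) \<le> C * exp (C * Im \<tau>))"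

definition harmonic_maass_form :: "real \<Rightarrow> mp set \<Rightarrow> (complex \<Rightarrow> complex) \<Rightarrow> bool" where
  "harmonic_maass_form k G f \<longleftrightarrow>
     smooth_on uhp f
     \<and> (\<forall>\<gamma>\<in>G. \<forall>\<tau>\<in>uhp. slash k \<gamma> f \<tau> = f \<tau>)
     \<and> (\<forall>\<tau>\<in>uhp. laplace k f \<tau> = 0)
     \<and> exp_growth_at_cusps k f"

definition nderiv :: "nat \<Rightarrow> (complex \<Rightarrow> complex) \<Rightarrow> complex \<Rightarrow> complex" where
  "nderiv s f \<tau> = (d_tau ^^ s) f \<tau> / (2 * complex_of_real pi * \<i>) ^ s"

definition rc_bracket :: "real \<Rightarrow> real \<Rightarrow> nat \<Rightarrow> (complex \<Rightarrow> complex) \<Rightarrow> (complex \<Rightarrow> complex)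
                         \<Rightarrow> complex \<Rightarrow> complex" where
  "rc_bracket k l j f g \<tau> =
     (\<Sum>s=0..j. (-1) ^ s * complex_of_real ((k + real j - 1) gchoose s)
                 * complex_of_real ((l + real j - 1) gchoose (j - s))
                 * nderiv (j - s) f \<tau> * nderiv s g \<tau>)"

end

theory Submission
  imports Defs
begin

text \<open>
  Write D and D' for the Wirtinger derivatives in tau and in
  conj(tau), and v = Im tau. Then Delta_k = -4 v^2 D D' + 2 i k v D', so harmonicity says
  D D' f = (i k / 2v) D' f. As D and D' commute (Schwarz), induction on n gives
  L (D^n f) = (i/2)^n (k)_n v^(-n) L f. Since L is a derivation, L [f,g]_j splits into a sum
  containing L g and a sum containing L f. By the identity
  binom(k+j-1,s) binom(l+j-1,j-s) (l)_s = binom(l+j-1,j) binom(j,s) (k+j-s)_s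
  the first sum is binom(l+j-1,j) L g times the expansion
  R_k^j f = sum_r (2i)^r binom(j,r) (k+r)_(j-r) v^(r-j) D^r f,
  and the second one is the same expression with the roles of f and g exchanged.
\<close>

section \<open>Directional derivatives and symmetry of second derivatives\<close>

definition dir_deriv :: "'a::real_normed_vector \<Rightarrow> ('a \<Rightarrow> 'b::real_normed_vector) \<Rightarrow> 'a \<Rightarrow> 'b" where
  "dir_deriv w F x = frechet_derivative F (at x) w"

lemma dir_deriv_eqI: "(F has_derivative D) (at x) \<Longrightarrow> dir_deriv w F x = D w"
  by (simp add: dir_deriv_def frechet_derivative_at[symmetric])

lemma has_derivative_dir_deriv:
  "F differentiable (at x) \<Longrightarrow> (F has_derivative (\<lambda>w. dir_deriv w F x)) (at x)"
  unfolding dir_deriv_def using frechet_derivative_works by blast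

lemma dir_deriv_add:
  "F differentiable (at x) \<Longrightarrow> G differentiable (at x) \<Longrightarrow>
    dir_deriv w (\<lambda>y. F y + G y) x = dir_deriv w F x + dir_deriv w G x"
  by (intro dir_deriv_eqI has_derivative_add has_derivative_dir_deriv)

lemma dir_deriv_sum:
  "finite I \<Longrightarrow> (\<And>i. i \<in> I \<Longrightarrow> F i differentiable (at x)) \<Longrightarrow>
    dir_deriv w (\<lambda>y. \<Sum>i\<in>I. F i y) x = (\<Sum>i\<in>I. dir_deriv w (F i) x)"
  by (intro dir_deriv_eqI has_derivative_sum has_derivative_dir_deriv)

lemma dir_deriv_mult:
  fixes F G :: "'a::real_normed_vector \<Rightarrow> 'b::real_normed_algebra"
  shows "F differentiable (at x) \<Longrightarrow> G differentiable (at x) \<Longrightarrow>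
    dir_deriv w (\<lambda>y. F y * G y) x = F x * dir_deriv w G x + dir_deriv w F x * G x"
  by (intro dir_deriv_eqI has_derivative_mult has_derivative_dir_deriv)

lemma dir_deriv_cmult:
  fixes F :: "'a::real_normed_vector \<Rightarrow> 'b::real_normed_algebra"
  shows "F differentiable (at x) \<Longrightarrow> dir_deriv w (\<lambda>y. c * F y) x = c * dir_deriv w F x"
  by (intro dir_deriv_eqI has_derivative_mult_right has_derivative_dir_deriv)

lemma dir_deriv_cong_open:
  assumes "open S" "x \<in> S" "\<And>y. y \<in> S \<Longrightarrow> F y = G y"
  shows "dir_deriv w F x = dir_deriv w G x"
proof -
  have "(F has_derivative D) (at x) \<longleftrightarrow> (G has_derivative D) (at x)" for D
    using has_derivative_transform_within_open[OF _ assms(1,2)] assms(3) by metis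
  then show ?thesis
    by (simp add: dir_deriv_def frechet_derivative_def)
qed

lemma differentiable_cong_open:
  assumes "open S" "x \<in> S" "\<And>y. y \<in> S \<Longrightarrow> F y = G y"
  shows "F differentiable (at x) \<longleftrightarrow> G differentiable (at x)"
  using has_derivative_transform_within_open[OF _ assms(1,2)] assms(3)
  unfolding differentiable_def by metis

lemma has_derivative_along_line:
  assumes "F differentiable (at (p + t *\<^sub>R a))"
  shows "((\<lambda>t. F (p + t *\<^sub>R a)) has_derivative (\<lambda>s. s *\<^sub>R dir_deriv a F (p + t *\<^sub>R a))) (at t within T)"
proof -
  have "((\<lambda>t. p + t *\<^sub>R a) has_derivative (\<lambda>s. s *\<^sub>R a)) (at t within T)"
    by (auto intro!: derivative_eq_intros)
  from has_derivative_compose[OF this has_derivative_dir_deriv[OF assms]]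
  show ?thesis
    using linear_cmul[OF linear_frechet_derivative[OF assms]] by (simp add: dir_deriv_def)
qed

lemma difference_along_segment_bound:
  fixes F :: "'a::real_normed_vector \<Rightarrow> 'b::real_normed_vector"
  assumes h: "0 \<le> h"
    and diff: "\<And>t. t \<in> {0..h} \<Longrightarrow> F differentiable (at (p + t *\<^sub>R a)) \<and> F differentiable (at (q + t *\<^sub>R a))"
    and bound: "\<And>t. t \<in> {0..h} \<Longrightarrow>
      norm ((dir_deriv a F (p + t *\<^sub>R a) - dir_deriv a F (q + t *\<^sub>R a)) - (dir_deriv a F p - dir_deriv a F q)) \<le> B"
  shows "norm ((F (p + h *\<^sub>R a) - F (q + h *\<^sub>R a)) - (F p - F q) - h *\<^sub>R (dir_deriv a F p - dir_deriv a F q)) \<le> h * B"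
proof -
  define c where "c t = dir_deriv a F (p + t *\<^sub>R a) - dir_deriv a F (q + t *\<^sub>R a)" for t
  define \<phi> where "\<phi> t = F (p + t *\<^sub>R a) - F (q + t *\<^sub>R a)" for t
  have "(\<phi> has_derivative (\<lambda>s. s *\<^sub>R c t)) (at t within {0..h})" if "t \<in> {0..h}" for t
    unfolding \<phi>_def c_def scaleR_diff_right using diff[OF that]
    by (intro has_derivative_diff has_derivative_along_line) auto
  moreover have "onorm ((\<lambda>s. s *\<^sub>R c t) - (\<lambda>s. s *\<^sub>R c 0)) \<le> B" if "t \<in> {0..h}" for t
  proof (rule onorm_le)
    fix s :: real
    show "norm (((\<lambda>s. s *\<^sub>R c t) - (\<lambda>s. s *\<^sub>R c 0)) s) \<le> B * norm s"
      using mult_left_mono[OF bound[OF that], of "\<bar>s\<bar>"]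
      by (simp add: c_def scaleR_diff_right[symmetric] mult.commute)
  qed
  ultimately have "norm (\<phi> h - \<phi> 0 - (\<lambda>s. s *\<^sub>R c 0) (h - 0)) \<le> norm (h - 0) * B"
    using h by (intro differentiable_bound_linearization[of 0 h "{0..h}"]) (auto simp: mult_left_le_one_le)
  then show ?thesis
    using h by (simp add: \<phi>_def c_def)
qed

lemma second_difference_approx:
  fixes F :: "'a::real_normed_vector \<Rightarrow> 'b::real_normed_vector"
  assumes S: "open S" "x \<in> S" "\<And>y. y \<in> S \<Longrightarrow> F differentiable (at y)"
    and A: "(dir_deriv a F has_derivative A) (at x)"
    and e: "e > 0"
  shows "\<exists>d>0. \<forall>h. 0 < h \<and> h < d \<longrightarrow>
     norm (F (x + h *\<^sub>R a + h *\<^sub>R b) - F (x + h *\<^sub>R a) - F (x + h *\<^sub>R b) + F x - (h\<^sup>2) *\<^sub>R A b)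
       \<le> 3 * e * h\<^sup>2 * (norm a + norm b + 1)"
proof -
  define G where "G = dir_deriv a F"
  define K where "K = norm a + norm b"
  define R where "R y = G y - G x - A (y - x)" for y
  obtain r where r: "r > 0" "ball x r \<subseteq> S"
    using openE[OF S(1,2)] by blast
  have lin_A: "linear A"
    using A has_derivative_linear by blast
  obtain d where d: "d > 0" "\<And>y. norm (y - x) < d \<Longrightarrow> norm (R y) \<le> e * norm (y - x)"
    using A e unfolding has_derivative_at_alt R_def G_def by blast
  define dd where "dd = min d r / (2 * (K + 1))"
  have K: "K \<ge> 0"
    by (simp add: K_def)
  show ?thesis
  proof (intro exI[of _ dd] conjI allI impI)
    show "dd > 0"
      using d r K by (simp add: dd_def)
    fix h :: real
    assume h: "0 < h \<and> h < dd"
    then have "h * (2 * (K + 1)) < min d r"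
      using K by (simp add: dd_def pos_less_divide_eq)
    then have "2 * h * K < min d r"
      using h by (simp add: algebra_simps)
    then have near: "norm (y - x) < d \<and> y \<in> S" if "norm (y - x) \<le> 2 * h * K" for y
      using that r(2) by (auto simp: dist_norm norm_minus_commute)
    have R_bound: "norm (R y) \<le> e * norm (y - x)" if "norm (y - x) \<le> 2 * h * K" for y
      using d(2) near[OF that] by blast
    have norm_ta: "norm (t *\<^sub>R a) \<le> h * norm a" and norm_tahb: "norm (t *\<^sub>R a + h *\<^sub>R b) \<le> h * K"
      if "t \<in> {0..h}" for t
      using that h norm_triangle_ineq[of "t *\<^sub>R a" "h *\<^sub>R b"] mult_right_mono[of t h "norm a"]
      by (auto simp: K_def algebra_simps)
    have small: "h * norm a \<le> 2 * h * K" "h * K \<le> 2 * h * K" "h * norm b \<le> 2 * h * K"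
      using h K by (auto simp: K_def algebra_simps)
    have segment: "norm ((F (x + h *\<^sub>R b + h *\<^sub>R a) - F (x + h *\<^sub>R a)) - (F (x + h *\<^sub>R b) - F x)
        - h *\<^sub>R (G (x + h *\<^sub>R b) - G x)) \<le> h * (2 * e * h * K)"
      unfolding G_def
    proof (rule difference_along_segment_bound)
      fix t :: real
      assume t: "t \<in> {0..h}"
      have "x + h *\<^sub>R b + t *\<^sub>R a \<in> S" "x + t *\<^sub>R a \<in> S"
        using near norm_tahb[OF t] norm_ta[OF t] small by (auto simp: algebra_simps)
      then show "F differentiable (at (x + h *\<^sub>R b + t *\<^sub>R a)) \<and> F differentiable (at (x + t *\<^sub>R a))"
        using S(3) by blast
      have "(G (x + h *\<^sub>R b + t *\<^sub>R a) - G (x + t *\<^sub>R a)) - (G (x + h *\<^sub>R b) - G x)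
          = R (x + (t *\<^sub>R a + h *\<^sub>R b)) - R (x + t *\<^sub>R a) - R (x + h *\<^sub>R b)"
        unfolding R_def using linear_diff[OF lin_A] linear_add[OF lin_A] by (simp add: algebra_simps)
      also have "norm \<dots> \<le> e * norm (t *\<^sub>R a + h *\<^sub>R b) + e * norm (t *\<^sub>R a) + e * norm (h *\<^sub>R b)"
        using R_bound[of "x + (t *\<^sub>R a + h *\<^sub>R b)"] R_bound[of "x + t *\<^sub>R a"] R_bound[of "x + h *\<^sub>R b"]
          norm_tahb[OF t] norm_ta[OF t] small h norm_triangle_ineq4 norm_triangle_ineq
        by (smt (verit, best) add_diff_cancel_left' norm_scaleR)
      also have "\<dots> \<le> e * (h * K) + e * (h * norm a) + e * (h * norm b)"
        using norm_tahb[OF t] norm_ta[OF t] h e by (intro add_mono mult_left_mono) auto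
      finally show "norm ((dir_deriv a F (x + h *\<^sub>R b + t *\<^sub>R a) - dir_deriv a F (x + t *\<^sub>R a))
          - (dir_deriv a F (x + h *\<^sub>R b) - dir_deriv a F x)) \<le> 2 * e * h * K"
        by (simp add: G_def K_def algebra_simps)
    qed (use h in simp)
    have R_bound_b: "h * norm (R (x + h *\<^sub>R b)) \<le> h * (e * (h * norm b))"
      using R_bound[of "x + h *\<^sub>R b"] small h by (simp add: mult_left_mono)
    have "F (x + h *\<^sub>R a + h *\<^sub>R b) - F (x + h *\<^sub>R a) - F (x + h *\<^sub>R b) + F x - (h\<^sup>2) *\<^sub>R A b
        = ((F (x + h *\<^sub>R b + h *\<^sub>R a) - F (x + h *\<^sub>R a)) - (F (x + h *\<^sub>R b) - F x)
          - h *\<^sub>R (G (x + h *\<^sub>R b) - G x)) + h *\<^sub>R R (x + h *\<^sub>R b)"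
      unfolding R_def using linear_cmul[OF lin_A]
      by (simp add: algebra_simps power2_eq_square scaleR_diff_right)
    also have "norm \<dots> \<le> h * (2 * e * h * K) + h * (e * (h * norm b))"
      using norm_triangle_mono[OF segment, of "h *\<^sub>R R (x + h *\<^sub>R b)"] R_bound_b h by simp
    also have "\<dots> \<le> 3 * e * h\<^sup>2 * (norm a + norm b + 1)"
      using h e by (simp add: K_def power2_eq_square algebra_simps)
    finally show "norm (F (x + h *\<^sub>R a + h *\<^sub>R b) - F (x + h *\<^sub>R a) - F (x + h *\<^sub>R b) + F x - (h\<^sup>2) *\<^sub>R A b)
       \<le> 3 * e * h\<^sup>2 * (norm a + norm b + 1)" .
  qed
qed

text \<open>Both mixed derivatives are limits of the same second difference divided by h^2.\<close>

lemma dir_deriv_commute: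
  fixes F :: "'a::real_normed_vector \<Rightarrow> 'b::real_normed_vector"
  assumes S: "open S" "x \<in> S" "\<And>y. y \<in> S \<Longrightarrow> F differentiable (at y)"
    and "dir_deriv a F differentiable (at x)" "dir_deriv b F differentiable (at x)"
  shows "dir_deriv b (dir_deriv a F) x = dir_deriv a (dir_deriv b F) x"
proof -
  define A where "A = frechet_derivative (dir_deriv a F) (at x)"
  define B where "B = frechet_derivative (dir_deriv b F) (at x)"
  have A: "(dir_deriv a F has_derivative A) (at x)" and B: "(dir_deriv b F has_derivative B) (at x)"
    using assms(4,5) frechet_derivative_works unfolding A_def B_def by blast+
  define K where "K = norm a + norm b + 1"
  have K: "K > 0"
    unfolding K_def by (smt (verit) norm_ge_zero)
  have bound: "norm (A b - B a) \<le> 6 * e * K" if e: "e > 0" for e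
  proof -
    define \<Delta> where "\<Delta> h = F (x + h *\<^sub>R a + h *\<^sub>R b) - F (x + h *\<^sub>R a) - F (x + h *\<^sub>R b) + F x" for h
    have \<Delta>_sym: "\<Delta> h = F (x + h *\<^sub>R b + h *\<^sub>R a) - F (x + h *\<^sub>R b) - F (x + h *\<^sub>R a) + F x" for h
      unfolding \<Delta>_def by (simp add: algebra_simps)
    obtain d1 where d1: "d1 > 0" "\<forall>h. 0 < h \<and> h < d1 \<longrightarrow> norm (\<Delta> h - h\<^sup>2 *\<^sub>R A b) \<le> 3 * e * h\<^sup>2 * K"
      using second_difference_approx[OF S A e, of b] unfolding \<Delta>_def K_def by auto
    obtain d2 where d2: "d2 > 0" "\<forall>h. 0 < h \<and> h < d2 \<longrightarrow> norm (\<Delta> h - h\<^sup>2 *\<^sub>R B a) \<le> 3 * e * h\<^sup>2 * K"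
      using second_difference_approx[OF S B e, of a] unfolding \<Delta>_sym K_def by (auto simp: add_ac)
    define h where "h = min d1 d2 / 2"
    have h: "0 < h" "h < d1" "h < d2"
      using d1 d2 by (auto simp: h_def)
    have "norm (\<Delta> h - h\<^sup>2 *\<^sub>R A b) \<le> 3 * e * h\<^sup>2 * K" "norm (\<Delta> h - h\<^sup>2 *\<^sub>R B a) \<le> 3 * e * h\<^sup>2 * K"
      using d1(2) d2(2) h by auto
    moreover have "h\<^sup>2 * (6 * e * K) = 3 * e * h\<^sup>2 * K + 3 * e * h\<^sup>2 * K"
      by (simp add: algebra_simps)
    moreover have "h\<^sup>2 * norm (A b - B a) = norm ((\<Delta> h - h\<^sup>2 *\<^sub>R B a) - (\<Delta> h - h\<^sup>2 *\<^sub>R A b))"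
      by (simp add: scaleR_diff_right[symmetric])
    ultimately have "h\<^sup>2 * norm (A b - B a) \<le> h\<^sup>2 * (6 * e * K)"
      using norm_triangle_ineq4[of "\<Delta> h - h\<^sup>2 *\<^sub>R B a" "\<Delta> h - h\<^sup>2 *\<^sub>R A b"] by linarith
    then show ?thesis
      using h by simp
  qed
  then have "norm (A b - B a) \<le> 0 + e" if "e > 0" for e
    using bound[of "e / (6 * K)"] K that by simp
  then have "norm (A b - B a) \<le> 0"
    by (rule field_le_epsilon)
  then show ?thesis
    by (simp add: dir_deriv_def A_def B_def)
qed

section \<open>Wirtinger derivatives of smooth functions\<close>

lemma d_u_eq_dir_deriv: "d_u F = dir_deriv 1 F"
  and d_v_eq_dir_deriv: "d_v F = dir_deriv \<i> F"
  by (simp_all add: d_u_def d_v_def dir_deriv_def fun_eq_iff)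

lemma d_tau_dir_deriv: "d_tau F \<tau> = (dir_deriv 1 F \<tau> - \<i> * dir_deriv \<i> F \<tau>) / 2"
  by (simp add: d_tau_def d_u_eq_dir_deriv d_v_eq_dir_deriv)

lemma d_taubar_dir_deriv: "d_taubar F \<tau> = (dir_deriv 1 F \<tau> + \<i> * dir_deriv \<i> F \<tau>) / 2"
  by (simp add: d_taubar_def d_u_eq_dir_deriv d_v_eq_dir_deriv)

lemma pdiff_Cons: "pdiff (b # bs) F = dir_deriv (if b then \<i> else 1) (pdiff bs F)"
  by (simp add: d_u_eq_dir_deriv d_v_eq_dir_deriv)

lemma pdiff_append_d_u: "pdiff bs (d_u F) = pdiff (bs @ [False]) F"
  and pdiff_append_d_v: "pdiff bs (d_v F) = pdiff (bs @ [True]) F"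
  by (induction bs) auto

lemma smooth_on_d_u: "smooth_on S F \<Longrightarrow> smooth_on S (d_u F)"
  and smooth_on_d_v: "smooth_on S F \<Longrightarrow> smooth_on S (d_v F)"
  unfolding smooth_on_def pdiff_append_d_u pdiff_append_d_v by blast+

lemma smooth_on_imp_differentiable: "smooth_on S F \<Longrightarrow> \<tau> \<in> S \<Longrightarrow> F differentiable (at \<tau>)"
  unfolding smooth_on_def using pdiff.simps(1) by metis

lemma pdiff_lincomb:
  assumes "open S" "smooth_on S F" "smooth_on S G" "\<tau> \<in> S"
  shows "pdiff bs (\<lambda>x. a * F x + b * G x) \<tau> = a * pdiff bs F \<tau> + b * pdiff bs G \<tau>"
  using assms(4)
proof (induction bs arbitrary: \<tau>)
  case (Cons c bs)
  have "pdiff bs F differentiable (at \<tau>)" "pdiff bs G differentiable (at \<tau>)"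
    using assms(2,3) Cons.prems unfolding smooth_on_def by blast+
  moreover have "dir_deriv w (pdiff bs (\<lambda>x. a * F x + b * G x)) \<tau>
      = dir_deriv w (\<lambda>x. a * pdiff bs F x + b * pdiff bs G x) \<tau>" for w
    using Cons by (intro dir_deriv_cong_open[OF assms(1)])
  ultimately show ?case
    unfolding pdiff_Cons by (simp add: dir_deriv_add dir_deriv_cmult differentiable_mult)
qed simp

lemma smooth_on_lincomb:
  assumes "open S" "smooth_on S F" "smooth_on S G"
  shows "smooth_on S (\<lambda>x. a * F x + b * G x)"
  unfolding smooth_on_def
proof (intro allI ballI)
  fix bs \<tau>
  assume \<tau>: "\<tau> \<in> S"
  have "(\<lambda>x. a * pdiff bs F x + b * pdiff bs G x) differentiable (at \<tau>)"
    using assms(2,3) \<tau> unfolding smooth_on_def by (intro differentiable_add differentiable_mult) auto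
  moreover have "pdiff bs (\<lambda>x. a * F x + b * G x) differentiable (at \<tau>)
      \<longleftrightarrow> (\<lambda>x. a * pdiff bs F x + b * pdiff bs G x) differentiable (at \<tau>)"
    by (rule differentiable_cong_open[OF assms(1) \<tau>]) (rule pdiff_lincomb[OF assms])
  ultimately show "pdiff bs (\<lambda>x. a * F x + b * G x) differentiable (at \<tau>)"
    by blast
qed

lemma d_tau_lincomb: "d_tau F = (\<lambda>x. (1/2) * d_u F x + (- \<i>/2) * d_v F x)"
  and d_taubar_lincomb: "d_taubar F = (\<lambda>x. (1/2) * d_u F x + (\<i>/2) * d_v F x)"
  by (auto simp: d_tau_def d_taubar_def fun_eq_iff field_simps)

lemma smooth_on_d_tau: "open S \<Longrightarrow> smooth_on S F \<Longrightarrow> smooth_on S (d_tau F)"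
  and smooth_on_d_taubar: "open S \<Longrightarrow> smooth_on S F \<Longrightarrow> smooth_on S (d_taubar F)"
  unfolding d_tau_lincomb d_taubar_lincomb by (intro smooth_on_lincomb smooth_on_d_u smooth_on_d_v; assumption)+

lemma smooth_on_d_tau_iterate: "open S \<Longrightarrow> smooth_on S F \<Longrightarrow> smooth_on S ((d_tau ^^ n) F)"
  by (induction n) (auto intro: smooth_on_d_tau)

lemma d_tau_mult: "F differentiable (at \<tau>) \<Longrightarrow> G differentiable (at \<tau>) \<Longrightarrow>
    d_tau (\<lambda>x. F x * G x) \<tau> = F \<tau> * d_tau G \<tau> + d_tau F \<tau> * G \<tau>"
  and d_taubar_mult: "F differentiable (at \<tau>) \<Longrightarrow> G differentiable (at \<tau>) \<Longrightarrow>
    d_taubar (\<lambda>x. F x * G x) \<tau> = F \<tau> * d_taubar G \<tau> + d_taubar F \<tau> * G \<tau>"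
  by (simp_all add: d_tau_dir_deriv d_taubar_dir_deriv dir_deriv_mult field_simps)

lemma d_tau_cmult: "F differentiable (at \<tau>) \<Longrightarrow> d_tau (\<lambda>x. c * F x) \<tau> = c * d_tau F \<tau>"
  and d_taubar_cmult: "F differentiable (at \<tau>) \<Longrightarrow> d_taubar (\<lambda>x. c * F x) \<tau> = c * d_taubar F \<tau>"
  by (simp_all add: d_tau_dir_deriv d_taubar_dir_deriv dir_deriv_cmult field_simps)

lemma d_tau_sum:
  "finite I \<Longrightarrow> (\<And>i. i \<in> I \<Longrightarrow> F i differentiable (at \<tau>)) \<Longrightarrow>
    d_tau (\<lambda>x. \<Sum>i\<in>I. F i x) \<tau> = (\<Sum>i\<in>I. d_tau (F i) \<tau>)"
  by (simp add: d_tau_dir_deriv dir_deriv_sum sum_subtractf[symmetric] sum_divide_distrib[symmetric]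
      sum_distrib_left)

lemma d_taubar_sum:
  "finite I \<Longrightarrow> (\<And>i. i \<in> I \<Longrightarrow> F i differentiable (at \<tau>)) \<Longrightarrow>
    d_taubar (\<lambda>x. \<Sum>i\<in>I. F i x) \<tau> = (\<Sum>i\<in>I. d_taubar (F i) \<tau>)"
  by (simp add: d_taubar_dir_deriv dir_deriv_sum sum.distrib[symmetric] sum_divide_distrib[symmetric]
      sum_distrib_left)

lemma d_tau_cong_open:
  "open S \<Longrightarrow> \<tau> \<in> S \<Longrightarrow> (\<And>x. x \<in> S \<Longrightarrow> F x = G x) \<Longrightarrow> d_tau F \<tau> = d_tau G \<tau>"
  by (simp add: d_tau_dir_deriv dir_deriv_cong_open[of S \<tau> F G])

lemma d_v_d_u_commute:
  assumes "open S" "smooth_on S F" "\<tau> \<in> S"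
  shows "d_v (d_u F) \<tau> = d_u (d_v F) \<tau>"
  unfolding d_u_eq_dir_deriv d_v_eq_dir_deriv
proof (rule dir_deriv_commute[OF assms(1,3)])
  show "\<And>y. y \<in> S \<Longrightarrow> F differentiable (at y)"
    using assms(2) smooth_on_imp_differentiable by blast
  show "dir_deriv 1 F differentiable (at \<tau>)" "dir_deriv \<i> F differentiable (at \<tau>)"
    using smooth_on_imp_differentiable[OF smooth_on_d_u[OF assms(2)] assms(3)]
      smooth_on_imp_differentiable[OF smooth_on_d_v[OF assms(2)] assms(3)]
    by (simp_all add: d_u_eq_dir_deriv d_v_eq_dir_deriv)
qed

lemma d_tau_d_taubar:
  assumes "open S" "smooth_on S F" "\<tau> \<in> S"
  shows "d_tau (d_taubar F) \<tau> = (d_u (d_u F) \<tau> + d_v (d_v F) \<tau>) / 4"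
    and "d_taubar (d_tau F) \<tau> = (d_u (d_u F) \<tau> + d_v (d_v F) \<tau>) / 4"
proof -
  have "d_u F differentiable (at \<tau>)" "d_v F differentiable (at \<tau>)"
    using assms smooth_on_imp_differentiable smooth_on_d_u smooth_on_d_v by blast+
  then have lin: "dir_deriv w (\<lambda>x. a * d_u F x + b * d_v F x) \<tau>
      = a * dir_deriv w (d_u F) \<tau> + b * dir_deriv w (d_v F) \<tau>" for w a b
    by (simp add: dir_deriv_add dir_deriv_cmult differentiable_mult)
  show "d_tau (d_taubar F) \<tau> = (d_u (d_u F) \<tau> + d_v (d_v F) \<tau>) / 4"
    "d_taubar (d_tau F) \<tau> = (d_u (d_u F) \<tau> + d_v (d_v F) \<tau>) / 4"
    unfolding d_tau_lincomb d_taubar_lincomb d_u_eq_dir_deriv d_v_eq_dir_deriv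
      lin[unfolded d_u_eq_dir_deriv d_v_eq_dir_deriv]
    using d_v_d_u_commute[OF assms] by (simp_all add: d_u_eq_dir_deriv d_v_eq_dir_deriv field_simps)
qed

lemma d_taubar_d_tau_commute:
  "open S \<Longrightarrow> smooth_on S F \<Longrightarrow> \<tau> \<in> S \<Longrightarrow> d_taubar (d_tau F) \<tau> = d_tau (d_taubar F) \<tau>"
  using d_tau_d_taubar by metis

section \<open>Harmonicity and powers of the imaginary part\<close>

lemma open_uhp: "open uhp"
  unfolding uhp_def using open_halfspace_Im_gt[of 0] by simp

lemma laplace_eq_wirtinger:
  assumes "open S" "smooth_on S F" "\<tau> \<in> S"
  shows "laplace k F \<tau> =
    - 4 * of_real ((Im \<tau>)\<^sup>2) * d_tau (d_taubar F) \<tau> + 2 * \<i> * of_real (k * Im \<tau>) * d_taubar F \<tau>"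
  unfolding laplace_def d_tau_d_taubar(1)[OF assms] d_taubar_def by (simp add: field_simps)

lemma d_tau_d_taubar_harmonic:
  assumes "smooth_on uhp F" "\<tau> \<in> uhp" "laplace k F \<tau> = 0"
  shows "d_tau (d_taubar F) \<tau> = \<i> * of_real k / (2 * of_real (Im \<tau>)) * d_taubar F \<tau>"
proof -
  have "Im \<tau> \<noteq> 0"
    using assms(2) by (simp add: uhp_def)
  then show ?thesis
    using assms(3) unfolding laplace_eq_wirtinger[OF open_uhp assms(1,2)]
    by (simp add: field_simps power2_eq_square)
qed

definition Im_powr :: "real \<Rightarrow> complex \<Rightarrow> complex" where
  "Im_powr a \<tau> = of_real (Im \<tau> powr a)"

lemma has_derivative_Im_powr:
  assumes "\<tau> \<in> uhp"
  shows "(Im_powr a has_derivative (\<lambda>h. of_real (a * Im \<tau> powr (a - 1) * Im h))) (at \<tau>)"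
proof -
  have "((\<lambda>x. Im x powr a) has_derivative (\<lambda>h. a * Im \<tau> powr (a - 1) * Im h)) (at \<tau>)"
    using assms by (auto intro!: derivative_eq_intros simp: uhp_def powr_diff mult_ac)
  then show ?thesis
    unfolding Im_powr_def[abs_def] by (rule has_derivative_of_real)
qed

lemma differentiable_Im_powr: "\<tau> \<in> uhp \<Longrightarrow> Im_powr a differentiable (at \<tau>)"
  using has_derivative_Im_powr unfolding differentiable_def by blast

lemma d_tau_Im_powr: "\<tau> \<in> uhp \<Longrightarrow> d_tau (Im_powr a) \<tau> = - \<i> * of_real a / 2 * Im_powr (a - 1) \<tau>"
  by (simp add: d_tau_dir_deriv dir_deriv_eqI[OF has_derivative_Im_powr] Im_powr_def)

lemma Im_powr_add: "Im_powr a \<tau> * Im_powr b \<tau> = Im_powr (a + b) \<tau>"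
  by (simp add: Im_powr_def powr_add)

lemma Im_powr_0: "\<tau> \<in> uhp \<Longrightarrow> Im_powr 0 \<tau> = 1"
  by (simp add: Im_powr_def uhp_def)

lemma Im_powr_minus_1: "\<tau> \<in> uhp \<Longrightarrow> Im_powr (-1) \<tau> = 1 / of_real (Im \<tau>)"
  by (simp add: Im_powr_def uhp_def powr_minus divide_inverse)

lemma d_taubar_d_tau_iterate_harmonic:
  assumes "smooth_on uhp F" "\<forall>\<tau>\<in>uhp. laplace k F \<tau> = 0" "\<tau> \<in> uhp"
  shows "d_taubar ((d_tau ^^ n) F) \<tau> = (\<i>/2)^n * of_real (pochhammer k n) * Im_powr (- real n) \<tau> * d_taubar F \<tau>"
  using assms(3)
proof (induction n arbitrary: \<tau>)
  case 0
  then show ?case by (simp add: Im_powr_0)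
next
  case (Suc n)
  define c where "c = (\<i>/2)^n * of_real (pochhammer k n)"
  have "d_taubar ((d_tau ^^ Suc n) F) \<tau> = d_tau (d_taubar ((d_tau ^^ n) F)) \<tau>"
    using d_taubar_d_tau_commute[OF open_uhp smooth_on_d_tau_iterate[OF open_uhp assms(1)] Suc.prems] by simp
  also have "\<dots> = d_tau (\<lambda>x. c * (Im_powr (- real n) x * d_taubar F x)) \<tau>"
    using Suc by (intro d_tau_cong_open[OF open_uhp]) (simp_all add: c_def mult_ac)
  also have "\<dots> = c * (Im_powr (- real n) \<tau> * d_tau (d_taubar F) \<tau> + d_tau (Im_powr (- real n)) \<tau> * d_taubar F \<tau>)"
    using differentiable_Im_powr smooth_on_imp_differentiable[OF smooth_on_d_taubar[OF open_uhp assms(1)]] Suc.prems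
    by (simp add: d_tau_cmult d_tau_mult differentiable_mult)
  also have "\<dots> = c * (\<i>/2 * (of_real k + of_nat n)) * Im_powr (- real (Suc n)) \<tau> * d_taubar F \<tau>"
  proof -
    have split_Suc: "Im_powr (- real (Suc n)) \<tau> = Im_powr (- real n) \<tau> * Im_powr (-1) \<tau>"
      by (simp add: Im_powr_add algebra_simps)
    have split: "Im_powr (- real n - 1) \<tau> = Im_powr (- real n) \<tau> * Im_powr (-1) \<tau>"
      unfolding split_Suc[symmetric] by (rule arg_cong[where f = "\<lambda>a. Im_powr a \<tau>"]) simp
    have harmonic: "d_tau (d_taubar F) \<tau> = \<i> * of_real k / 2 * Im_powr (-1) \<tau> * d_taubar F \<tau>"
      using d_tau_d_taubar_harmonic[OF assms(1) Suc.prems] assms(2) Suc.prems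
      by (simp add: Im_powr_minus_1)
    show ?thesis
      unfolding harmonic d_tau_Im_powr[OF Suc.prems] split split_Suc by (simp add: algebra_simps)
  qed
  also have "\<dots> = (\<i>/2)^(Suc n) * of_real (pochhammer k (Suc n)) * Im_powr (- real (Suc n)) \<tau> * d_taubar F \<tau>"
    by (simp add: c_def pochhammer_Suc)
  finally show ?case .
qed

section \<open>Iterated raising operators\<close>

definition raise_coeff :: "real \<Rightarrow> nat \<Rightarrow> nat \<Rightarrow> complex" where
  "raise_coeff k j r = (2 * \<i>) ^ r * of_real (real (j choose r) * pochhammer (k + real r) (j - r))"

lemma raise_coeff_eq_0: "j < r \<Longrightarrow> raise_coeff k j r = 0"
  by (simp add: raise_coeff_def)

lemma raise_coeff_Suc_0: "raise_coeff k (Suc j) 0 = of_real (k + real j) * raise_coeff k j 0"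
  by (simp add: raise_coeff_def pochhammer_Suc)

lemma raise_coeff_Suc_Suc:
  "raise_coeff k (Suc j) (Suc r) = of_real (k + real j + real (Suc r)) * raise_coeff k j (Suc r) + 2 * \<i> * raise_coeff k j r"
proof -
  have "real (Suc j choose Suc r) * pochhammer (k + real (Suc r)) (j - r)
      = (k + real j + real (Suc r)) * (real (j choose Suc r) * pochhammer (k + real (Suc r)) (j - Suc r))
        + real (j choose r) * pochhammer (k + real r) (j - r)"
  proof (cases "r < j")
    case True
    define m where "m = j - Suc r"
    define Q where "Q = pochhammer (k + real (Suc r)) m"
    have j: "j - r = Suc m" "j - Suc r = m" "real j = real r + real m + 1"
      using True by (simp_all add: m_def)
    have "pochhammer (k + real (Suc r)) (Suc m) = Q * (k + real j)"
      unfolding Q_def pochhammer_Suc by (simp add: j(3) add_ac)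
    moreover have "pochhammer (k + real r) (Suc m) = (k + real r) * Q"
      unfolding Q_def pochhammer_rec by (simp add: add_ac)
    moreover have binomial: "real (Suc r) * real (j choose Suc r) = real (Suc m) * real (j choose r)"
      using binomial_absorption[of r j] binomial_absorb_comp[of j r] True j(1)
      by (metis of_nat_mult)
    ultimately show ?thesis
      unfolding j(1,2) binomial_Suc_Suc Q_def[symmetric]
      by (simp add: j(3) algebra_simps) (metis distrib_left)
  qed simp
  then show ?thesis
    by (simp add: raise_coeff_def algebra_simps)
qed

lemma raise_coeff_sum_Suc:
  "(\<Sum>r\<le>j. raise_coeff k j r * (2 * \<i> * X (Suc r) + of_real (k + real j + real r) * X r))
    = (\<Sum>r\<le>Suc j. raise_coeff k (Suc j) r * X r)"
proof -
  define g where "g r = of_real (k + real j + real r) * raise_coeff k j r * X r" for r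
  have "(\<Sum>r\<le>j. g r) = (\<Sum>r\<le>Suc j. g r)"
    by (simp add: g_def raise_coeff_eq_0)
  also have "\<dots> = g 0 + (\<Sum>r\<le>j. g (Suc r))"
    by (rule sum.atMost_Suc_shift)
  finally have "(\<Sum>r\<le>j. g r) = g 0 + (\<Sum>r\<le>j. g (Suc r))" .
  then show ?thesis
    unfolding sum.atMost_Suc_shift[of _ j] raise_coeff_Suc_0 raise_coeff_Suc_Suc
    by (simp add: g_def algebra_simps sum.distrib sum_distrib_left)
qed

lemma raise_op_cong_open:
  "open S \<Longrightarrow> \<tau> \<in> S \<Longrightarrow> (\<And>x. x \<in> S \<Longrightarrow> F x = G x) \<Longrightarrow> raise_op w F \<tau> = raise_op w G \<tau>"
  by (simp add: raise_op_def d_tau_cong_open[of S \<tau> F G])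

lemma raise_op_sum:
  "finite I \<Longrightarrow> (\<And>i. i \<in> I \<Longrightarrow> F i differentiable (at \<tau>)) \<Longrightarrow>
    raise_op w (\<lambda>x. \<Sum>i\<in>I. c i * F i x) \<tau> = (\<Sum>i\<in>I. c i * raise_op w (F i) \<tau>)"
  by (simp add: raise_op_def d_tau_sum d_tau_cmult differentiable_mult sum.distrib sum_distrib_left
      algebra_simps)

lemma raise_op_Im_powr_mult:
  assumes "\<tau> \<in> uhp" "H differentiable (at \<tau>)"
  shows "raise_op w (\<lambda>x. Im_powr a x * H x) \<tau> =
    2 * \<i> * Im_powr a \<tau> * d_tau H \<tau> + of_real (w + a) * Im_powr (a - 1) \<tau> * H \<tau>"
proof -
  have "Im_powr (a - 1) \<tau> = Im_powr a \<tau> / of_real (Im \<tau>)"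
    using Im_powr_add[of a \<tau> "-1"] Im_powr_minus_1[OF assms(1)] by simp
  then have weight: "of_real (w / Im \<tau>) * (Im_powr a \<tau> * H \<tau>) = of_real w * Im_powr (a - 1) \<tau> * H \<tau>"
    by simp
  show ?thesis
    unfolding raise_op_def d_tau_mult[OF differentiable_Im_powr[OF assms(1)] assms(2)]
      d_tau_Im_powr[OF assms(1)] weight
    by (simp add: algebra_simps)
qed

lemma raise_pow_expansion:
  assumes "smooth_on uhp f" "\<tau> \<in> uhp"
  shows "raise_pow k j f \<tau> = (\<Sum>r\<le>j. raise_coeff k j r * Im_powr (real r - real j) \<tau> * (d_tau ^^ r) f \<tau>)"
  using assms(2)
proof (induction j arbitrary: \<tau>)
  case 0
  then show ?case
    by (simp add: raise_coeff_def Im_powr_0)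
next
  case (Suc j)
  define X where "X r = Im_powr (real r - real (Suc j)) \<tau> * (d_tau ^^ r) f \<tau>" for r
  have diff: "(d_tau ^^ r) f differentiable (at \<tau>)" for r
    using smooth_on_imp_differentiable[OF smooth_on_d_tau_iterate[OF open_uhp assms(1)] Suc.prems] .
  have exponents: "Im_powr (real r - real j) \<tau> = Im_powr (real (Suc r) - real (Suc j)) \<tau>"
    "Im_powr (real r - real j - 1) \<tau> = Im_powr (real r - real (Suc j)) \<tau>" for r
    by (rule arg_cong[where f = "\<lambda>a. Im_powr a \<tau>"], simp)+
  have raise_step: "raise_op (k + 2 * real j) (\<lambda>x. Im_powr (real r - real j) x * (d_tau ^^ r) f x) \<tau>
      = 2 * \<i> * X (Suc r) + of_real (k + real j + real r) * X r" for r
  proof -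
    have "k + 2 * real j + (real r - real j) = k + real j + real r"
      by simp
    then show ?thesis
      unfolding raise_op_Im_powr_mult[OF Suc.prems diff] exponents X_def by (simp add: mult.assoc)
  qed
  have "raise_pow k (Suc j) f \<tau> = raise_op (k + 2 * real j)
      (\<lambda>x. \<Sum>r\<le>j. raise_coeff k j r * (Im_powr (real r - real j) x * (d_tau ^^ r) f x)) \<tau>"
    by (simp, rule raise_op_cong_open[OF open_uhp Suc.prems]) (simp add: Suc.IH mult.assoc)
  also have "\<dots> = (\<Sum>r\<le>j. raise_coeff k j r *
      raise_op (k + 2 * real j) (\<lambda>x. Im_powr (real r - real j) x * (d_tau ^^ r) f x) \<tau>)"
    using diff differentiable_Im_powr[OF Suc.prems] by (intro raise_op_sum) (auto intro: differentiable_mult)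
  also have "\<dots> = (\<Sum>r\<le>j. raise_coeff k j r * (2 * \<i> * X (Suc r) + of_real (k + real j + real r) * X r))"
    by (simp add: raise_step)
  also have "\<dots> = (\<Sum>r\<le>Suc j. raise_coeff k (Suc j) r * X r)"
    by (rule raise_coeff_sum_Suc)
  finally show ?case
    by (simp add: X_def mult.assoc)
qed

section \<open>The lowering operator on Rankin-Cohen brackets\<close>

lemma gbinomial_mult_pochhammer:
  fixes a b :: real
  assumes "s \<le> j"
  shows "(a + real j - 1 gchoose s) * (b + real j - 1 gchoose (j - s)) * pochhammer b s
    = (b + real j - 1 gchoose j) * real (j choose s) * pochhammer (a + real (j - s)) s"
proof -
  have gchoose: "(a + real j - 1 gchoose s) = pochhammer (a + real (j - s)) s / fact s"
    "(b + real j - 1 gchoose (j - s)) = pochhammer (b + real s) (j - s) / fact (j - s)"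
    "(b + real j - 1 gchoose j) = pochhammer b j / fact j"
    unfolding gbinomial_pochhammer' using assms by (simp_all add: of_nat_diff algebra_simps)
  have pochhammer: "pochhammer b j = pochhammer b s * pochhammer (b + real s) (j - s)"
    using pochhammer_product'[of b s "j - s"] assms by simp
  have "real (j choose s) = fact j / (fact s * fact (j - s))"
    using binomial_fact[OF assms] by simp
  then show ?thesis
    unfolding gchoose pochhammer by (simp add: field_simps)
qed

lemma lower_op_mult:
  "F differentiable (at \<tau>) \<Longrightarrow> G differentiable (at \<tau>) \<Longrightarrow>
    lower_op (\<lambda>x. F x * G x) \<tau> = F \<tau> * lower_op G \<tau> + lower_op F \<tau> * G \<tau>"
  by (simp add: lower_op_def d_taubar_mult algebra_simps)

lemma lower_op_sum:
  "finite I \<Longrightarrow> (\<And>i. i \<in> I \<Longrightarrow> F i differentiable (at \<tau>)) \<Longrightarrow>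
    lower_op (\<lambda>x. \<Sum>i\<in>I. c i * F i x) \<tau> = (\<Sum>i\<in>I. c i * lower_op (F i) \<tau>)"
  by (simp add: lower_op_def d_taubar_sum d_taubar_cmult sum_distrib_left sum_negf algebra_simps)

lemma nderiv_cmult: "nderiv n F = (\<lambda>x. 1 / (2 * of_real pi * \<i>) ^ n * (d_tau ^^ n) F x)"
  by (simp add: nderiv_def fun_eq_iff)

lemma differentiable_nderiv: "smooth_on uhp F \<Longrightarrow> \<tau> \<in> uhp \<Longrightarrow> nderiv n F differentiable (at \<tau>)"
  unfolding nderiv_cmult
  using smooth_on_imp_differentiable[OF smooth_on_d_tau_iterate[OF open_uhp]] by simp

lemma lower_op_nderiv_harmonic:
  assumes "smooth_on uhp F" "\<forall>\<tau>\<in>uhp. laplace k F \<tau> = 0" "\<tau> \<in> uhp"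
  shows "lower_op (nderiv n F) \<tau> =
    (\<i>/2)^n * of_real (pochhammer k n) * Im_powr (- real n) \<tau> * lower_op F \<tau> / (2 * of_real pi * \<i>) ^ n"
  using smooth_on_imp_differentiable[OF smooth_on_d_tau_iterate[OF open_uhp assms(1)] assms(3)]
  unfolding lower_op_def nderiv_cmult
  by (simp only: d_taubar_cmult d_taubar_d_tau_iterate_harmonic[OF assms]) (simp add: field_simps)

lemma rc_bracket_normalisation:
  assumes "s \<le> j"
  shows "(- 4 * of_real pi) ^ j * (-1) ^ s * (\<i>/2) ^ s = (2 * \<i>) ^ (j - s) * (2 * of_real pi * \<i> :: complex) ^ j"
proof -
  have "- 4 * of_real pi = 2 * \<i> * (2 * of_real pi * \<i> :: complex)"
    by (simp add: algebra_simps)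
  then have "(- 4 * of_real pi) ^ j = (2 * \<i>) ^ j * (2 * of_real pi * \<i> :: complex) ^ j"
    by (simp only: power_mult_distrib)
  also have "(2 * \<i>) ^ j = (2 * \<i>) ^ (j - s) * (2 * \<i> :: complex) ^ s"
    by (simp only: power_add[symmetric] le_add_diff_inverse2[OF assms])
  finally have split: "(- 4 * of_real pi) ^ j = (2 * \<i>) ^ (j - s) * (2 * \<i>) ^ s * (2 * of_real pi * \<i> :: complex) ^ j" .
  have "(2 * \<i>) ^ s * (-1) ^ s * (\<i>/2) ^ s = (1 :: complex)"
    by (simp only: power_mult_distrib[symmetric]) simp
  moreover have "(- 4 * of_real pi) ^ j * (-1) ^ s * (\<i>/2) ^ s
      = (2 * \<i>) ^ (j - s) * (2 * of_real pi * \<i>) ^ j * ((2 * \<i>) ^ s * (-1) ^ s * (\<i>/2) ^ s)"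
    unfolding split by (simp only: mult_ac)
  ultimately show ?thesis
    by simp
qed

lemma lower_op_rc_bracket_term:
  assumes "smooth_on uhp g" "\<forall>\<tau>\<in>uhp. laplace l g \<tau> = 0" "\<tau> \<in> uhp" "s \<le> j"
  shows "(- 4 * of_real pi) ^ j * ((-1) ^ s * of_real ((k + real j - 1) gchoose s)
      * of_real ((l + real j - 1) gchoose (j - s)) * (nderiv (j - s) f \<tau> * lower_op (nderiv s g) \<tau>))
    = of_real ((l + real j - 1) gchoose j)
      * (raise_coeff k j (j - s) * Im_powr (real (j - s) - real j) \<tau> * (d_tau ^^ (j - s)) f \<tau>) * lower_op g \<tau>"
proof -
  define P where "P = 2 * of_real pi * (\<i> :: complex)"
  define Y where "Y = Im_powr (- real s) \<tau> * (d_tau ^^ (j - s)) f \<tau> * lower_op g \<tau>"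
  have "P ^ (j - s) * P ^ s = P ^ j"
    using assms(4) by (simp add: power_add[symmetric])
  then have "(- 4 * of_real pi) ^ j * ((-1) ^ s * of_real ((k + real j - 1) gchoose s)
      * of_real ((l + real j - 1) gchoose (j - s)) * (nderiv (j - s) f \<tau> * lower_op (nderiv s g) \<tau>))
    = ((- 4 * of_real pi) ^ j * (-1) ^ s * (\<i>/2) ^ s / P ^ j)
      * of_real (((k + real j - 1) gchoose s) * ((l + real j - 1) gchoose (j - s)) * pochhammer l s) * Y"
    unfolding lower_op_nderiv_harmonic[OF assms(1-3)] nderiv_def P_def[symmetric] Y_def
    by (simp add: field_simps P_def)
  also have "\<dots> = (2 * \<i>) ^ (j - s)
      * of_real (((l + real j - 1) gchoose j) * real (j choose s) * pochhammer (k + real (j - s)) s) * Y"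
    unfolding P_def rc_bracket_normalisation[OF assms(4)] gbinomial_mult_pochhammer[OF assms(4)] by simp
  also have "\<dots> = of_real ((l + real j - 1) gchoose j)
      * (raise_coeff k j (j - s) * Im_powr (real (j - s) - real j) \<tau> * (d_tau ^^ (j - s)) f \<tau>) * lower_op g \<tau>"
  proof -
    have "Im_powr (- real s) \<tau> = Im_powr (real (j - s) - real j) \<tau>"
      by (rule arg_cong[where f = "\<lambda>a. Im_powr a \<tau>"]) (simp add: of_nat_diff assms(4))
    then show ?thesis
      using assms(4) by (simp add: raise_coeff_def Y_def binomial_symmetric[of s j] mult_ac)
  qed
  finally show ?thesis .
qed

lemma lower_op_rc_bracket_half:
  assumes "smooth_on uhp f" "smooth_on uhp g" "\<forall>\<tau>\<in>uhp. laplace l g \<tau> = 0" "\<tau> \<in> uhp"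
  shows "(- 4 * of_real pi) ^ j * (\<Sum>s=0..j. (-1) ^ s * of_real ((k + real j - 1) gchoose s)
      * of_real ((l + real j - 1) gchoose (j - s)) * (nderiv (j - s) f \<tau> * lower_op (nderiv s g) \<tau>))
    = of_real ((l + real j - 1) gchoose j) * raise_pow k j f \<tau> * lower_op g \<tau>"
proof -
  define T where "T r = raise_coeff k j r * Im_powr (real r - real j) \<tau> * (d_tau ^^ r) f \<tau>" for r
  have "(- 4 * of_real pi) ^ j * (\<Sum>s=0..j. (-1) ^ s * of_real ((k + real j - 1) gchoose s)
      * of_real ((l + real j - 1) gchoose (j - s)) * (nderiv (j - s) f \<tau> * lower_op (nderiv s g) \<tau>))
    = (\<Sum>s=0..j. of_real ((l + real j - 1) gchoose j) * T (j - s) * lower_op g \<tau>)"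
    unfolding sum_distrib_left T_def by (intro sum.cong refl lower_op_rc_bracket_term[OF assms(2-4)]) simp
  also have "\<dots> = of_real ((l + real j - 1) gchoose j) * (\<Sum>r=0..j. T r) * lower_op g \<tau>"
    by (subst (2) sum.atLeastAtMost_rev) (simp add: sum_distrib_left sum_distrib_right)
  also have "\<dots> = of_real ((l + real j - 1) gchoose j) * raise_pow k j f \<tau> * lower_op g \<tau>"
    by (simp add: raise_pow_expansion[OF assms(1,4)] T_def atLeast0AtMost)
  finally show ?thesis .
qed

lemma lower_op_rc_bracket:
  assumes "smooth_on uhp f" "\<forall>\<tau>\<in>uhp. laplace k f \<tau> = 0"
    and "smooth_on uhp g" "\<forall>\<tau>\<in>uhp. laplace l g \<tau> = 0"
    and "\<tau> \<in> uhp"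
  shows "(- 4 * of_real pi) ^ j * lower_op (rc_bracket k l j f g) \<tau> =
      of_real ((l + real j - 1) gchoose j) * raise_pow k j f \<tau> * lower_op g \<tau>
    + (-1) ^ j * of_real ((k + real j - 1) gchoose j) * lower_op f \<tau> * raise_pow l j g \<tau>"
proof -
  define c :: "real \<Rightarrow> real \<Rightarrow> nat \<Rightarrow> complex" where
    "c a b s = (-1) ^ s * of_real ((a + real j - 1) gchoose s) * of_real ((b + real j - 1) gchoose (j - s))" for a b s
  have "rc_bracket k l j f g = (\<lambda>x. \<Sum>s\<in>{0..j}. c k l s * (nderiv (j - s) f x * nderiv s g x))"
    by (simp add: rc_bracket_def c_def fun_eq_iff mult.assoc)
  then have "lower_op (rc_bracket k l j f g) \<tau>
      = (\<Sum>s=0..j. c k l s * lower_op (\<lambda>x. nderiv (j - s) f x * nderiv s g x) \<tau>)"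
    using differentiable_nderiv assms(1,3,5) by (simp add: lower_op_sum)
  also have "\<dots> = (\<Sum>s=0..j. c k l s * (nderiv (j - s) f \<tau> * lower_op (nderiv s g) \<tau>))
      + (\<Sum>s=0..j. c k l s * (nderiv s g \<tau> * lower_op (nderiv (j - s) f) \<tau>))"
    using differentiable_nderiv assms(1,3,5) by (simp add: lower_op_mult distrib_left sum.distrib mult_ac)
  also have "(\<Sum>s=0..j. c k l s * (nderiv s g \<tau> * lower_op (nderiv (j - s) f) \<tau>))
      = (-1) ^ j * (\<Sum>s=0..j. c l k s * (nderiv (j - s) g \<tau> * lower_op (nderiv s f) \<tau>))"
  proof -
    have "c k l (j - s) = (-1) ^ j * c l k s" if "s \<le> j" for s
      using that by (simp add: c_def power_diff_conv_inverse field_simps)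
    then show ?thesis
      by (subst sum.atLeastAtMost_rev) (simp add: sum_distrib_left mult_ac)
  qed
  finally show ?thesis
    using lower_op_rc_bracket_half[OF assms(1,3,4,5), of j k]
      lower_op_rc_bracket_half[OF assms(3,1,2,5), of j l]
    by (simp add: c_def algebra_simps)
qed

theorem proposition3p6:
  fixes G :: "mp set" and k l :: real and f g :: "complex \<Rightarrow> complex" and j :: nat
  assumes "congruence_subgroup_Mp2 G"
    and "harmonic_maass_form k G f"
    and "harmonic_maass_form l G g"
  shows "\<forall>\<tau>\<in>uhp.
    (- 4 * complex_of_real pi) ^ j * lower_op (rc_bracket k l j f g) \<tau> =
      complex_of_real ((l + real j - 1) gchoose j) * raise_pow k j f \<tau> * lower_op g \<tau>
    + (-1) ^ j * complex_of_real ((k + real j - 1) gchoose j) * lower_op f \<tau> * raise_pow l j g \<tau>"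
  using assms(2,3) lower_op_rc_bracket by (simp add: harmonic_maass_form_def)

end
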